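(* For every integer $n\ge 3$, the sum of all principal minors of order $n-1$ of $L_S$ equals $$\sum_{i=1}^{n}\det(L_S[i])=\frac{n}{2\sqrt{3}}\,(p^{n}-q^{n}),$$ where $L_S[i]$ is the matrix obtained from $L_S$ by deleting its $i$-th row and $i$-th column. Equivalently, if $\det(xI-L_S)=x^n+a_1x^{n-1}+\dots+a_{n-1}x+a_n$, then $(-1)^{n-1}a_{n-1}=\frac{n}{2\sqrt3}(p^n-q^n)$.
   Context: $p=2+\sqrt3$, $q=2-\sqrt3$. $L_S$ denotes the $n\times n$ matrix with all diagonal entries equal to $4$, entries $(i,i+1)$ and $(i+1,i)$ equal to $-1$ for $1\le i\le n-1$, entries $(1,n)$ and $(n,1)$ equal to $+1$, and all other entries $0$. *)

theory Defs
  imports "Jordan_Normal_Form.Determinant"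
begin

text \<open>The n x n matrix L_S (0-indexed: paper's row i is index i-1):
  diagonal 4, sub/super-diagonal -1, corners (1,n),(n,1) equal to +1.\<close>
definition L_S :: "nat \<Rightarrow> real mat" where
  "L_S n = mat n n (\<lambda>(i, j).
      if i = j then 4
      else if j = i + 1 \<or> i = j + 1 then -1
      else if (i = 0 \<and> j = n - 1) \<or> (i = n - 1 \<and> j = 0) then 1
      else 0)"

end

theory Submission
  imports Defs
begin

text \<open>Delete row and column \<open>i\<close> of \<open>L_S\<close> and list the remaining indices cyclically,
  starting with \<open>i + 1\<close>. Consecutive indices are then neighbours on the cycle, and the
  only neighbouring pair with entry \<open>+1\<close> is the corner pair \<open>n - 1, 0\<close>; flipping the sign
  of every index listed after the wrap-around makes all these entries \<open>-1\<close>. So each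
  principal minor of order \<open>n - 1\<close> equals \<open>det (T (n - 1))\<close>, where \<open>T m\<close> is the
  \<open>m \<times> m\<close> tridiagonal matrix with \<open>4\<close> on the diagonal and \<open>-1\<close> beside it. Expanding
  along the last row gives \<open>det (T (m + 2)) = 4 det (T (m + 1)) - det (T m)\<close>, a recurrence
  with characteristic roots \<open>p, q = 2 \<plusminus> sqrt 3\<close>; hence \<open>det (T (n - 1)) = (p\<^sup>n - q\<^sup>n) / (p - q)\<close>.\<close>

lemma det_permute_rows_cols:
  fixes A :: "'a::comm_ring_1 mat"
  assumes A: "A \<in> carrier_mat n n" and p: "p permutes {0..<n}"
  shows "det (mat n n (\<lambda>(i, j). A $$ (p i, p j))) = det A"
proof -
  let ?B = "mat n n (\<lambda>(i, j). A $$ (p i, j))"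
  have "mat n n (\<lambda>(i, j). A $$ (p i, p j))
      = transpose_mat (mat n n (\<lambda>(i, j). transpose_mat ?B $$ (p i, j)))"
    using p by (intro eq_matI) (auto simp: permutes_in_image)
  then have "det (mat n n (\<lambda>(i, j). A $$ (p i, p j))) = signof p * det (transpose_mat ?B)"
    using det_permute_rows[OF _ p, of "transpose_mat ?B"] by (simp add: det_transpose[OF mat_carrier])
  also have "\<dots> = signof p * signof p * det A"
    using det_permute_rows[OF A p] by (simp add: det_transpose[OF mat_carrier])
  also have "signof p * signof p = (1::'a)"
    by (simp add: sign_def)
  finally show ?thesis by simp
qed

lemma det_scale_rows_cols:
  fixes A :: "'a::comm_ring_1 mat"
  assumes A: "A \<in> carrier_mat n n"
  shows "det (mat n n (\<lambda>(i, j). d i * e j * A $$ (i, j)))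
       = (\<Prod>i<n. d i) * (\<Prod>i<n. e i) * det A"
proof -
  have "(\<Prod>i = 0..<n. d i * e (q i) * A $$ (i, q i))
      = (\<Prod>i<n. d i) * (\<Prod>i<n. e i) * (\<Prod>i = 0..<n. A $$ (i, q i))"
    if q: "q permutes {0..<n}" for q
    using prod.permute[OF q, of e]
    by (simp add: prod.distrib atLeast0LessThan comp_def)
  moreover have "q i < n" if "q permutes {0..<n}" "i < n" for q i
    using that permutes_in_image by fastforce
  ultimately show ?thesis
    unfolding det_def'[OF A] det_def'[OF mat_carrier] sum_distrib_left
    by (intro sum.cong) (auto simp: ac_simps intro!: prod.cong)
qed

definition tridiag_mat :: "nat \<Rightarrow> 'a::zero \<Rightarrow> 'a \<Rightarrow> 'a mat" where
  "tridiag_mat n a b =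
     mat n n (\<lambda>(i, j). if i = j then a else if i = j + 1 \<or> j = i + 1 then b else 0)"

lemma tridiag_mat_carrier [simp]: "tridiag_mat n a b \<in> carrier_mat n n"
  by (simp add: tridiag_mat_def)

lemma det_tridiag_mat_0: "det (tridiag_mat 0 a b) = 1"
  by (rule det_dim_zero) simp

lemma det_tridiag_mat_Suc_0: "det (tridiag_mat (Suc 0) a b) = a"
  by (simp add: det_single tridiag_mat_def)

lemma det_tridiag_mat_Suc_Suc:
  fixes a b :: "'a::comm_ring_1"
  shows "det (tridiag_mat (Suc (Suc n)) a b)
       = a * det (tridiag_mat (Suc n) a b) - b\<^sup>2 * det (tridiag_mat n a b)"
proof -
  let ?A = "tridiag_mat (Suc (Suc n)) a b"
  let ?N = "mat_delete ?A (Suc n) n"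
  have N: "?N \<in> carrier_mat (Suc n) (Suc n)"
    using mat_delete_carrier[OF tridiag_mat_carrier, of "Suc (Suc n)" a b] by simp
  have "det ?N = (\<Sum>i<Suc n. ?N $$ (i, n) * cofactor ?N i n)"
    by (rule laplace_expansion_column[OF N]) simp
  also have "\<dots> = ?N $$ (n, n) * cofactor ?N n n"
    by (simp add: sum.neutral tridiag_mat_def mat_delete_def)
  also have "mat_delete ?N n n = tridiag_mat n a b"
    by (rule eq_matI) (auto simp: tridiag_mat_def mat_delete_def)
  then have "cofactor ?N n n = det (tridiag_mat n a b)"
    by (simp add: cofactor_def)
  finally have minor: "det ?N = b * det (tridiag_mat n a b)"
    by (simp add: tridiag_mat_def mat_delete_def)
  have "mat_delete ?A (Suc n) (Suc n) = tridiag_mat (Suc n) a b"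
    by (rule eq_matI) (auto simp: tridiag_mat_def mat_delete_def)
  then have "cofactor ?A (Suc n) (Suc n) = det (tridiag_mat (Suc n) a b)"
    by (simp add: cofactor_def)
  moreover have "cofactor ?A (Suc n) n = - b * det (tridiag_mat n a b)"
    by (simp add: cofactor_def minor)
  moreover have "det ?A = (\<Sum>j<Suc (Suc n). ?A $$ (Suc n, j) * cofactor ?A (Suc n) j)"
    by (rule laplace_expansion_row[OF tridiag_mat_carrier]) simp
  then have "det ?A = ?A $$ (Suc n, n) * cofactor ?A (Suc n) n
                    + ?A $$ (Suc n, Suc n) * cofactor ?A (Suc n) (Suc n)"
    by (simp add: sum.neutral tridiag_mat_def)
  ultimately show ?thesis
    by (simp add: tridiag_mat_def power2_eq_square)
qed

lemma det_tridiag_mat_4_minus_1: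
  "det (tridiag_mat n 4 (-1 :: real)) =
     ((2 + sqrt 3) ^ Suc n - (2 - sqrt 3) ^ Suc n) / (2 * sqrt 3)"
proof (induction n rule: induct_nat_012)
  case 0
  show ?case by (simp add: det_tridiag_mat_0)
next
  case 1
  have "(2 + sqrt 3)\<^sup>2 - (2 - sqrt 3)\<^sup>2 = 8 * sqrt 3"
    by (simp add: power2_sum power2_diff)
  then show ?case
    by (simp add: det_tridiag_mat_Suc_0 numeral_2_eq_2[symmetric])
next
  case (ge2 n)
  have root_power: "x ^ Suc (Suc (Suc n)) = 4 * x ^ Suc (Suc n) - x ^ Suc n"
    if "x\<^sup>2 = 4 * x - 1" for x :: real
  proof -
    have "x ^ Suc (Suc (Suc n)) = x ^ Suc n * x\<^sup>2"
      by (simp add: power2_eq_square)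
    also have "\<dots> = x ^ Suc n * (4 * x - 1)"
      using that by simp
    also have "\<dots> = 4 * x ^ Suc (Suc n) - x ^ Suc n"
      by (simp add: algebra_simps)
    finally show ?thesis .
  qed
  define p q :: real where "p = 2 + sqrt 3" and "q = 2 - sqrt 3"
  have "p\<^sup>2 = 4 * p - 1" "q\<^sup>2 = 4 * q - 1"
    unfolding p_def q_def by (simp_all add: power2_sum power2_diff)
  note powers = this[THEN root_power]
  have "det (tridiag_mat (Suc (Suc n)) 4 (-1 :: real))
      = 4 * det (tridiag_mat (Suc n) 4 (-1 :: real)) - det (tridiag_mat n 4 (-1 :: real))"
    by (simp add: det_tridiag_mat_Suc_Suc)
  also have "\<dots> = ((4 * p ^ Suc (Suc n) - p ^ Suc n) - (4 * q ^ Suc (Suc n) - q ^ Suc n))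
                    / (2 * sqrt 3)"
    using ge2.IH unfolding p_def[symmetric] q_def[symmetric] by (simp add: field_simps)
  also have "\<dots> = (p ^ Suc (Suc (Suc n)) - q ^ Suc (Suc (Suc n))) / (2 * sqrt 3)"
    by (simp only: powers)
  finally show ?case
    by (simp only: p_def q_def)
qed

lemma L_S_carrier [simp]: "L_S n \<in> carrier_mat n n"
  by (simp add: L_S_def)

lemma rotation_permutes:
  fixes i m :: nat
  assumes "i \<le> m"
  shows "(\<lambda>k. if k < m then (i + k) mod m else k) permutes {0..<m}"
proof (rule bij_imp_permutes)
  let ?rot = "\<lambda>k. if k < m then (i + k) mod m else k"
  have rot: "?rot k = (if i + k < m then i + k else i + k - m)" if "k < m" for k
    using that assms by (simp add: mod_if)
  have inj: "inj_on ?rot {0..<m}"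
  proof (rule inj_onI)
    fix x y assume "x \<in> {0..<m}" "y \<in> {0..<m}" "?rot x = ?rot y"
    then show "x = y"
      using rot[of x] rot[of y] by (auto split: if_splits)
  qed
  moreover have "?rot ` {0..<m} \<subseteq> {0..<m}"
    by auto
  ultimately have "?rot ` {0..<m} = {0..<m}"
    using endo_inj_surj[OF finite_atLeastLessThan] by blast
  with inj show "bij_betw ?rot {0..<m} {0..<m}"
    unfolding bij_betw_def by blast
qed simp

lemma skip_index_rotation:
  fixes i k m :: nat
  assumes "i \<le> m" and "k < m"
  shows "(if (i + k) mod m < i then (i + k) mod m else Suc ((i + k) mod m)) = (i + 1 + k) mod Suc m"
  using assms by (auto simp: mod_if)

lemma L_S_cyclic_entry:
  fixes i k l m :: nat
  assumes "i \<le> m" and "k < m" and "l < m"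
  defines "c \<equiv> \<lambda>k. (i + 1 + k) mod Suc m"
    and "s \<equiv> \<lambda>k. if i + 1 + k < Suc m then 1 else -1 :: real"
  shows "L_S (Suc m) $$ (c k, c l) = s k * s l * tridiag_mat m 4 (-1) $$ (k, l)"
proof -
  have c: "c j = (if i + j < m then Suc (i + j) else i + j - m)" if "j < m" for j
    using that assms(1) by (simp add: c_def mod_if)
  let ?same = "(i + k < m) = (i + l < m)"
  have diag: "c k = c l \<longleftrightarrow> k = l"
    using assms(1-3) unfolding c[OF assms(2)] c[OF assms(3)] by auto
  have adjacent: "(c l = c k + 1 \<or> c k = c l + 1) \<longleftrightarrow> (k = l + 1 \<or> l = k + 1) \<and> ?same"
    using assms(1-3) unfolding c[OF assms(2)] c[OF assms(3)] by auto
  have corner: "(c k = 0 \<and> c l = m \<or> c k = m \<and> c l = 0) \<longleftrightarrow> (k = l + 1 \<or> l = k + 1) \<and> \<not> ?same"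
    using assms(1-3) unfolding c[OF assms(2)] c[OF assms(3)] by auto
  have "L_S (Suc m) $$ (c k, c l) =
      (if c k = c l then 4 else if c l = c k + 1 \<or> c k = c l + 1 then -1
       else if c k = 0 \<and> c l = m \<or> c k = m \<and> c l = 0 then 1 else 0)"
    by (simp add: L_S_def c_def)
  then show ?thesis
    using assms(2,3) unfolding diag adjacent corner s_def tridiag_mat_def by auto
qed

lemma det_principal_minor_L_S:
  assumes "i < n"
  shows "det (mat_delete (L_S n) i i) = det (tridiag_mat (n - 1) 4 (-1))"
proof -
  obtain m where n: "n = Suc m" and i: "i \<le> m"
    using assms by (cases n) auto
  define rot where "rot k = (if k < m then (i + k) mod m else k)" for k
  define s :: "nat \<Rightarrow> real" where "s k = (if i + 1 + k < Suc m then 1 else -1)" for k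
  let ?M = "mat_delete (L_S n) i i"
  let ?R = "mat m m (\<lambda>(k, l). ?M $$ (rot k, rot l))"
  let ?D = "mat m m (\<lambda>(k, l). s k * s l * tridiag_mat m 4 (-1) $$ (k, l))"
  have M: "?M \<in> carrier_mat m m"
    using mat_delete_carrier[OF L_S_carrier, of n i i] n by simp
  have "?R = ?D"
  proof (rule eq_matI)
    fix k l assume "k < dim_row ?D" and "l < dim_col ?D"
    then have k: "k < m" and l: "l < m" by simp_all
    then have "rot k < m" "rot l < m" by (simp_all add: rot_def)
    then show "?R $$ (k, l) = ?D $$ (k, l)"
      using k l L_S_cyclic_entry[OF i k l]
      by (simp add: mat_delete_def carrier_matD[OF L_S_carrier] n rot_def s_def
          skip_index_rotation[OF i])
  qed simp_all
  moreover have "(\<Prod>k<m. s k) * (\<Prod>k<m. s k) = 1"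
    unfolding prod.distrib[symmetric] by (rule prod.neutral) (simp add: s_def)
  ultimately have "det ?R = det (tridiag_mat m 4 (-1))"
    by (simp add: det_scale_rows_cols)
  moreover have "rot permutes {0..<m}"
    unfolding rot_def by (rule rotation_permutes[OF i])
  ultimately show ?thesis
    using det_permute_rows_cols[OF M, of rot] by (simp add: n)
qed

theorem fact1:
  fixes n :: nat
  assumes "n \<ge> 3"
  shows "(\<Sum>i<n. det (mat_delete (L_S n) i i)) =
         real n / (2 * sqrt 3) * ((2 + sqrt 3) ^ n - (2 - sqrt 3) ^ n)"
proof -
  have "(\<Sum>i<n. det (mat_delete (L_S n) i i)) = real n * det (tridiag_mat (n - 1) 4 (-1))"
    by (simp add: det_principal_minor_L_S)
  moreover have "Suc (n - 1) = n"
    using assms by simp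
  ultimately show ?thesis
    using det_tridiag_mat_4_minus_1[of "n - 1"] by simp
qed

end
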